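(* Let $W$ and $A$ be finite sets and $V\subseteq W$. Let $\mathcal{P}\subseteq\Delta_W(V)$ be a convex set. Let $\mathcal{G}\subseteq\Delta_{W,A}$ satisfy $\mathcal{G}|_V=\prod_{w\in V}\mathcal{G}_w\subseteq\Delta_{V,A}$, where $\mathcal{G}_w\subseteq\Delta_A$ is a convex set for all $w\in V$. Then $\mathcal{P}\ast\mathcal{G}\subseteq\Delta_{W\times A}$ is convex.
   Context: $\Delta_X$ is the probability simplex on a finite set $X$; $\Delta_{X,Y}=\prod_{x\in X}\Delta_Y$ is the set of Markov kernels $g(y|x)$. For $\mathcal{P}\subseteq\Delta_W$ and $\mathcal{G}\subseteq\Delta_{W,A}$, $\mathcal{P}\ast\mathcal{G}=\{q(w,a)=p(w)g(a|w)\in\Delta_{W\times A}\colon p\in\mathcal{P},g\in\mathcal{G}\}$. For $V\subseteq W$, $\Delta_W(V)=\{p\in\Delta_W\colon \{w\colon p(w)>0\}\subseteq V\}$. For $\mathcal{G}\subseteq\Delta_{W,A}$, $\mathcal{G}|_V=\{h\in\Delta_{V,A}\colon \text{there is } g\in\mathcal{G} \text{ with } h(\cdot|w)=g(\cdot|w)\text{ for all }w\in V\}$. *)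

theory Defs
  imports Complex_Main
begin

definition simplex :: "'x set \<Rightarrow> ('x \<Rightarrow> real) set" where
  "simplex X = {p. (\<forall>x. 0 \<le> p x) \<and> (\<forall>x. x \<notin> X \<longrightarrow> p x = 0) \<and> sum p X = 1}"

text \<open>Markov kernels g(y|x) = g x y, x in X, y in Y; g x is the zero function
  for x outside X (canonical representative).\<close>
definition kernels :: "'x set \<Rightarrow> 'y set \<Rightarrow> ('x \<Rightarrow> 'y \<Rightarrow> real) set" where
  "kernels X Y = {g. (\<forall>x\<in>X. g x \<in> simplex Y) \<and> (\<forall>x. x \<notin> X \<longrightarrow> g x = (\<lambda>_. 0))}"

definition simplex_supp :: "'x set \<Rightarrow> 'x set \<Rightarrow> ('x \<Rightarrow> real) set" where
  "simplex_supp W V = {p \<in> simplex W. {w. p w > 0} \<subseteq> V}"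

definition compose :: "('w \<Rightarrow> real) set \<Rightarrow> ('w \<Rightarrow> 'a \<Rightarrow> real) set \<Rightarrow> ('w \<times> 'a \<Rightarrow> real) set" where
  "compose P G = {q. \<exists>p\<in>P. \<exists>g\<in>G. q = (\<lambda>(w, a). p w * g w a)}"

definition restrict_kernels :: "('w \<Rightarrow> 'a \<Rightarrow> real) set \<Rightarrow> 'w set \<Rightarrow> 'a set \<Rightarrow> ('w \<Rightarrow> 'a \<Rightarrow> real) set" where
  "restrict_kernels G V A = {h \<in> kernels V A. \<exists>g\<in>G. \<forall>w\<in>V. h w = g w}"

definition prod_kernels :: "'w set \<Rightarrow> ('w \<Rightarrow> ('a \<Rightarrow> real) set) \<Rightarrow> ('w \<Rightarrow> 'a \<Rightarrow> real) set" where
  "prod_kernels V Gw = {h. (\<forall>w\<in>V. h w \<in> Gw w) \<and> (\<forall>w. w \<notin> V \<longrightarrow> h w = (\<lambda>_. 0))}"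

definition convex_fun_set :: "('x \<Rightarrow> real) set \<Rightarrow> bool" where
  "convex_fun_set S \<longleftrightarrow> (\<forall>x\<in>S. \<forall>y\<in>S. \<forall>t::real. 0 \<le> t \<and> t \<le> 1 \<longrightarrow>
      (\<lambda>z. t * x z + (1 - t) * y z) \<in> S)"

end

theory Submission
  imports Defs
begin

text \<open>Mix the two joint distributions fibrewise: over each w the mixture of
  p1(w) g1(-|w) and p2(w) g2(-|w) is p(w) times a convex combination of
  g1(-|w) and g2(-|w), with weight t p1(w) / p(w). Since G restricted to V is
  a product of the convex fibres G_w, these fibrewise choices glue to a single
  kernel of G; outside V both sides vanish because P is supported in V.\<close>

lemma convex_fun_set_scaled_mixture:
  fixes C :: "('x \<Rightarrow> real) set" and a b :: real
  assumes "convex_fun_set C" and "u \<in> C" and "v \<in> C" and "0 \<le> a" and "0 \<le> b"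
  obtains k where "k \<in> C" and "\<And>z. a * u z + b * v z = (a + b) * k z"
proof (cases "a + b = 0")
  case True
  with assms have "a = 0" "b = 0" by auto
  with \<open>u \<in> C\<close> show ?thesis using that by auto
next
  case False
  define s where "s = a / (a + b)"
  have s: "0 \<le> s" "s \<le> 1" "(a + b) * s = a"
    using assms False by (auto simp: s_def)
  have "(\<lambda>z. s * u z + (1 - s) * v z) \<in> C"
    using assms s unfolding convex_fun_set_def by blast
  moreover have "a * u z + b * v z = (a + b) * (s * u z + (1 - s) * v z)" for z
  proof -
    have "(a + b) * (s * u z + (1 - s) * v z) = (a + b) * s * u z + (a + b - (a + b) * s) * v z"
      by (simp add: algebra_simps)
    with s show ?thesis by simp
  qed
  ultimately show ?thesis using that by blast
qed

lemma simplex_supp_nonneg: "p \<in> simplex_supp W V \<Longrightarrow> 0 \<le> p w"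
  by (simp add: simplex_supp_def simplex_def)

lemma simplex_supp_vanishes: "p \<in> simplex_supp W V \<Longrightarrow> w \<notin> V \<Longrightarrow> p w = 0"
  using simplex_supp_nonneg[of p W V w] by (force simp: simplex_supp_def)

lemma kernel_in_factor:
  assumes "restrict_kernels G V A = prod_kernels V Gw" and "G \<subseteq> kernels W A" and "V \<subseteq> W"
    and "g \<in> G" and "w \<in> V"
  shows "g w \<in> Gw w"
proof -
  define h where "h = (\<lambda>x. if x \<in> V then g x else (\<lambda>_. 0))"
  have "h \<in> kernels V A"
    using assms(2-4) unfolding kernels_def h_def by auto
  then have "h \<in> restrict_kernels G V A"
    using assms(4) unfolding restrict_kernels_def h_def by auto
  then have "h \<in> prod_kernels V Gw"
    using assms(1) by simp
  then show ?thesis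
    using \<open>w \<in> V\<close> unfolding prod_kernels_def h_def by auto
qed

lemma kernel_of_factors:
  assumes "restrict_kernels G V A = prod_kernels V Gw" and "\<forall>w\<in>V. h w \<in> Gw w"
  obtains g where "g \<in> G" and "\<forall>w\<in>V. g w = h w"
proof -
  have "(\<lambda>w. if w \<in> V then h w else (\<lambda>_. 0)) \<in> restrict_kernels G V A"
    using assms unfolding prod_kernels_def by auto
  then show ?thesis
    using that unfolding restrict_kernels_def by force
qed

lemma convex_compose_of_convex_fibres:
  fixes C :: "'w \<Rightarrow> ('a \<Rightarrow> real) set"
  assumes P: "P \<subseteq> simplex_supp W V" "convex_fun_set P"
    and G_fibres: "\<forall>g\<in>G. \<forall>w\<in>V. g w \<in> C w"
    and C_convex: "\<forall>w\<in>V. convex_fun_set (C w)"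
    and glue: "\<And>h. \<forall>w\<in>V. h w \<in> C w \<Longrightarrow> \<exists>g\<in>G. \<forall>w\<in>V. g w = h w"
  shows "convex_fun_set (compose P G)"
  unfolding convex_fun_set_def
proof (intro ballI allI impI)
  fix x y and t :: real
  assume "x \<in> compose P G" "y \<in> compose P G" and t: "0 \<le> t \<and> t \<le> 1"
  then obtain p1 g1 p2 g2 where p12: "p1 \<in> P" "p2 \<in> P" and g12: "g1 \<in> G" "g2 \<in> G"
    and x: "x = (\<lambda>(w, a). p1 w * g1 w a)" and y: "y = (\<lambda>(w, a). p2 w * g2 w a)"
    unfolding compose_def by blast
  define p where "p = (\<lambda>w. t * p1 w + (1 - t) * p2 w)"
  have "p \<in> P"
    using P(2) p12 t unfolding convex_fun_set_def p_def by blast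
  have "\<forall>w\<in>V. \<exists>k\<in>C w. \<forall>a. t * p1 w * g1 w a + (1 - t) * p2 w * g2 w a = p w * k a"
  proof
    fix w assume "w \<in> V"
    have "p1 \<in> simplex_supp W V" "p2 \<in> simplex_supp W V"
      using p12 P(1) by auto
    then have "0 \<le> t * p1 w" "0 \<le> (1 - t) * p2 w"
      using t by (simp_all add: simplex_supp_nonneg)
    then obtain k where "k \<in> C w"
      and "\<And>a. t * p1 w * g1 w a + (1 - t) * p2 w * g2 w a = (t * p1 w + (1 - t) * p2 w) * k a"
      using convex_fun_set_scaled_mixture[of "C w" "g1 w" "g2 w"] \<open>w \<in> V\<close> G_fibres C_convex g12
      by (metis mult.assoc)
    then show "\<exists>k\<in>C w. \<forall>a. t * p1 w * g1 w a + (1 - t) * p2 w * g2 w a = p w * k a"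
      unfolding p_def by blast
  qed
  then obtain k where k: "\<forall>w\<in>V. k w \<in> C w"
    and mix: "\<forall>w\<in>V. \<forall>a. t * p1 w * g1 w a + (1 - t) * p2 w * g2 w a = p w * k w a"
    by (metis bchoice)
  obtain g where "g \<in> G" and gk: "\<forall>w\<in>V. g w = k w"
    using glue[OF k] by blast
  have "(\<lambda>z. t * x z + (1 - t) * y z) = (\<lambda>(w, a). p w * g w a)"
  proof (rule ext, clarify)
    fix w a
    show "t * x (w, a) + (1 - t) * y (w, a) = p w * g w a"
    proof (cases "w \<in> V")
      case True
      then show ?thesis using mix gk x y by (simp add: mult.assoc)
    next
      case False
      have "p1 w = 0" "p2 w = 0" "p w = 0"
        using simplex_supp_vanishes[OF _ False] p12 \<open>p \<in> P\<close> P(1) by auto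
      then show ?thesis using x y by simp
    qed
  qed
  with \<open>p \<in> P\<close> \<open>g \<in> G\<close> show "(\<lambda>z. t * x z + (1 - t) * y z) \<in> compose P G"
    unfolding compose_def by blast
qed

theorem proposition7:
  fixes W :: "'w set" and A :: "'a set" and V :: "'w set"
    and P :: "('w \<Rightarrow> real) set" and G :: "('w \<Rightarrow> 'a \<Rightarrow> real) set"
    and Gw :: "'w \<Rightarrow> ('a \<Rightarrow> real) set"
  assumes "finite W" and "finite A" and "V \<subseteq> W"
    and "P \<subseteq> simplex_supp W V" and "convex_fun_set P"
    and "G \<subseteq> kernels W A"
    and "\<forall>w\<in>V. Gw w \<subseteq> simplex A \<and> convex_fun_set (Gw w)"
    and "restrict_kernels G V A = prod_kernels V Gw"
  shows "convex_fun_set (compose P G)"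
proof (rule convex_compose_of_convex_fibres[where C = Gw])
  show "\<forall>g\<in>G. \<forall>w\<in>V. g w \<in> Gw w"
    using kernel_in_factor[OF assms(8,6,3)] by blast
  show "\<exists>g\<in>G. \<forall>w\<in>V. g w = h w" if "\<forall>w\<in>V. h w \<in> Gw w" for h
    using kernel_of_factors[OF assms(8) that] by blast
qed (use assms in auto)

end
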